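(* Let $n\in\mathbb{N}$, let $c=(c_{i,j})$ be an $n\times(n+1)$ matrix with entries in $\{0,1\}$, $\sigma_1,\ldots,\sigma_n>0$, and $\gamma_1,\ldots,\gamma_{n+1}>0$ with $\sum_jc_{i,j}\gamma_j>0$ for every $i$. Let $\boldsymbol{\Lambda}=(\Lambda_1,\ldots,\Lambda_{n+1})'$ have independent coordinates $\Lambda_j\sim Ga(\gamma_j,1)$. Let $W_{i,j}$, $i=1,\ldots,n$, $j=1,\ldots,n+1$, be random variables that are exponential with randomized rates, $W_{i,j}*\Lambda_j$: conditionally on $\boldsymbol{\Lambda}=(\lambda_1,\ldots,\lambda_{n+1})$, the $W_{i,j}$ are mutually independent and $W_{i,j}\sim Exp(\lambda_j)$. Set, for $i=1,\ldots,n$, \[ X_i=\sigma_i\min_{j\in\{1,\ldots,n+1\}:\,c_{i,j}\ne0}\left(W_{i,j}*\Lambda_j\right). \] Then $\mathbf{X}=(X_1,\ldots,X_n)'$ satisfies \[ \mathbf{P}[X_1>x_1,\ldots,X_n>x_n]=\prod_{j=1}^{n+1}\left(1+\sum_{i=1}^n\frac{c_{i,j}}{\sigma_i}x_i\right)^{-\gamma_j},\quad (x_1,\ldots,x_n)'\in(0,\infty)^n. \]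
   Context: $Exp(\lambda)$ is the exponential distribution with rate $\lambda$; $Ga(\gamma,1)$ is the gamma distribution with shape $\gamma$ and rate $1$. The mixture operator $*$: for a family $X_\lambda\sim C(\cdot;\lambda)$ and a random parameter $\Lambda\sim H$, $X_\lambda*\Lambda$ denotes the random variable $X_\Lambda$, i.e. with conditional law $C(\cdot;\lambda)$ given $\Lambda=\lambda$. *)

theory Defs
  imports "HOL-Probability.Probability"
begin

definition gamma_density :: "real \<Rightarrow> real \<Rightarrow> real" where
  "gamma_density a x = (if 0 < x then x powr (a - 1) * exp (- x) / Gamma a else 0)"

text \<open>Law of Lambda = (Lambda_0,...,Lambda_n): independent Ga(gamma_j,1) coordinates
  (indices j < n+1, 0-based).\<close>
definition Lam_law :: "nat \<Rightarrow> (nat \<Rightarrow> real) \<Rightarrow> (nat \<Rightarrow> real) measure" where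
  "Lam_law n \<gamma> = PiM {..<Suc n} (\<lambda>j. density lborel (gamma_density (\<gamma> j)))"

definition W_kernel :: "nat \<Rightarrow> (nat \<Rightarrow> real) \<Rightarrow> (nat \<times> nat \<Rightarrow> real) measure" where
  "W_kernel n l = PiM ({..<n} \<times> {..<Suc n}) (\<lambda>(i, j). density lborel (exponential_density (l j)))"

definition Lam_space :: "nat \<Rightarrow> (nat \<Rightarrow> real) measure" where
  "Lam_space n = PiM {..<Suc n} (\<lambda>_. borel)"

definition W_space :: "nat \<Rightarrow> (nat \<times> nat \<Rightarrow> real) measure" where
  "W_space n = PiM ({..<n} \<times> {..<Suc n}) (\<lambda>_. borel)"

definition joint_law :: "nat \<Rightarrow> (nat \<Rightarrow> real) \<Rightarrow> ((nat \<Rightarrow> real) \<times> (nat \<times> nat \<Rightarrow> real)) measure" where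
  "joint_law n \<gamma> = Lam_law n \<gamma> \<bind>
      (\<lambda>l. distr (W_kernel n l) (Lam_space n \<Otimes>\<^sub>M W_space n) (\<lambda>w. (l, w)))"

end

theory Submission
  imports Defs
begin

text \<open>Conditionally on \<open>\<Lambda> = \<lambda>\<close>, the survival event \<open>X > x\<close> asks the independent exponentials
  \<open>W\<^sub>i\<^sub>j\<close> with \<open>c\<^sub>i\<^sub>j \<noteq> 0\<close> to exceed \<open>x\<^sub>i / \<sigma>\<^sub>i\<close>, which has probability
  \<open>\<Prod>\<^sub>j exp (- \<lambda>\<^sub>j \<Sum>\<^sub>i c\<^sub>i\<^sub>j x\<^sub>i / \<sigma>\<^sub>i)\<close>. Integrating against the independent gamma laws of the
  \<open>\<Lambda>\<^sub>j\<close> factorises over \<open>j\<close>, and each factor is the Laplace transform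
  \<open>E exp (- s \<Lambda>\<^sub>j) = (1 + s) powr (- \<gamma>\<^sub>j)\<close> of \<open>Ga(\<gamma>\<^sub>j, 1)\<close>.\<close>

abbreviation gamma_measure :: "real \<Rightarrow> real measure" where
  "gamma_measure g \<equiv> density lborel (gamma_density g)"

abbreviation exponential_measure :: "real \<Rightarrow> real measure" where
  "exponential_measure a \<equiv> density lborel (exponential_density a)"

lemma nn_integral_powr_exp_eq_Gamma:
  fixes g u :: real
  assumes g: "0 < g" and u: "0 < u"
  shows "(\<integral>\<^sup>+x. ennreal (indicator {0..} x * x powr (g - 1) * exp (- u * x)) \<partial>lborel)
         = ennreal (Gamma g / u powr g)"
proof -
  define G where "G x = indicator {0..} x * x powr (g - 1) * exp (- u * x)" for x :: real
  have G_meas[measurable]: "G \<in> borel_measurable borel" unfolding G_def by measurable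
  have scaled: "ennreal (indicator {0..} (0 + u * x) * (0 + u * x) powr (g - 1) / exp (0 + u * x))
      = ennreal (u powr (g - 1)) * ennreal (G x)" for x
  proof (cases "0 \<le> x")
    case True
    then have "(u * x) powr (g - 1) = u powr (g - 1) * x powr (g - 1)"
      using u by (simp add: powr_mult)
    then show ?thesis using True u
      by (simp add: G_def ennreal_mult'[symmetric] exp_minus field_simps zero_le_mult_iff)
  next
    case False
    then show ?thesis using u by (simp add: G_def zero_le_mult_iff)
  qed
  have "ennreal (Gamma g) = (\<integral>\<^sup>+t. ennreal (indicator {0..} t * t powr (g - 1) / exp t) \<partial>lborel)"
    by (rule Gamma_conv_nn_integral_real[OF g])
  also have "\<dots> = ennreal \<bar>u\<bar> * (\<integral>\<^sup>+x. ennreal (indicator {0..} (0 + u * x)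
                   * (0 + u * x) powr (g - 1) / exp (0 + u * x)) \<partial>lborel)"
    by (rule nn_integral_real_affine) (use u in auto)
  also have "\<dots> = ennreal u * (ennreal (u powr (g - 1)) * (\<integral>\<^sup>+x. ennreal (G x) \<partial>lborel))"
    unfolding scaled using u by (subst nn_integral_cmult) auto
  also have "\<dots> = ennreal (u powr g) * (\<integral>\<^sup>+x. ennreal (G x) \<partial>lborel)"
    using u by (simp add: mult.assoc[symmetric] ennreal_mult'[symmetric] powr_diff)
  finally have Gamma_eq: "ennreal (Gamma g) = ennreal (u powr g) * (\<integral>\<^sup>+x. ennreal (G x) \<partial>lborel)" .
  have "(\<integral>\<^sup>+x. ennreal (G x) \<partial>lborel)
      = ennreal (1 / u powr g) * (ennreal (u powr g) * (\<integral>\<^sup>+x. ennreal (G x) \<partial>lborel))"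
    using u by (simp add: mult.assoc[symmetric] ennreal_mult'[symmetric])
  also have "\<dots> = ennreal (Gamma g / u powr g)"
    unfolding Gamma_eq[symmetric] using u g by (simp add: ennreal_mult'[symmetric] Gamma_real_pos)
  finally show ?thesis by (simp add: G_def)
qed

lemma nn_integral_gamma_measure_exp:
  fixes g s :: real
  assumes g: "0 < g" and s: "0 \<le> s"
  shows "(\<integral>\<^sup>+a. ennreal (exp (- s * a)) \<partial>gamma_measure g) = ennreal ((1 + s) powr (- g))"
proof -
  have Gamma_pos: "0 < Gamma g" using g by (rule Gamma_real_pos)
  have "(\<integral>\<^sup>+a. ennreal (exp (- s * a)) \<partial>gamma_measure g)
      = (\<integral>\<^sup>+a. ennreal (gamma_density g a) * ennreal (exp (- s * a)) \<partial>lborel)"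
    by (rule nn_integral_density) (auto simp: gamma_density_def)
  also have "\<dots> = (\<integral>\<^sup>+a. ennreal (1 / Gamma g)
      * ennreal (indicator {0..} a * a powr (g - 1) * exp (- (1 + s) * a)) \<partial>lborel)"
  proof (rule nn_integral_cong)
    fix a :: real
    have "exp (- a) * exp (- s * a) = exp (- (1 + s) * a)"
      by (simp add: exp_add[symmetric] algebra_simps)
    then show "ennreal (gamma_density g a) * ennreal (exp (- s * a))
        = ennreal (1 / Gamma g) * ennreal (indicator {0..} a * a powr (g - 1) * exp (- (1 + s) * a))"
      using Gamma_pos
      by (cases "0 < a") (auto simp: gamma_density_def ennreal_mult'[symmetric] field_simps)
  qed
  also have "\<dots> = ennreal (1 / Gamma g) * ennreal (Gamma g / (1 + s) powr g)"
    using nn_integral_powr_exp_eq_Gamma[OF g, of "1 + s"] s by (simp add: nn_integral_cmult)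
  also have "\<dots> = ennreal ((1 + s) powr (- g))"
    using Gamma_pos s by (simp add: ennreal_mult'[symmetric] powr_minus divide_inverse)
  finally show ?thesis .
qed

lemma prob_space_gamma_measure: "0 < g \<Longrightarrow> prob_space (gamma_measure g)"
  by (rule prob_spaceI) (use nn_integral_gamma_measure_exp[of g 0] in \<open>simp add: nn_integral_const\<close>)

text \<open>A nonpositive rate gives the zero measure, so \<open>W_kernel n l\<close> is a subprobability
  kernel for every \<open>l\<close>, as the kernel measurability below requires.\<close>

lemma emeasure_exponential_measure_nonpos: "a \<le> 0 \<Longrightarrow> emeasure (exponential_measure a) Y = 0"
proof -
  assume a: "a \<le> 0"
  have "AE x in lborel. ennreal (exponential_density a x) = 0"
    using a by (auto simp: exponential_density_def ennreal_eq_0_iff mult_nonpos_nonneg)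
  then have "exponential_measure a = density lborel (\<lambda>_. 0)"
    by (rule density_cong[rotated 2]) auto
  then show ?thesis
    by (cases "Y \<in> sets lborel") (simp_all add: emeasure_density_const emeasure_notin_sets)
qed

lemma subprob_space_exponential_measure: "subprob_space (exponential_measure a)"
proof (cases "0 < a")
  case True
  then show ?thesis by (intro prob_space_imp_subprob_space prob_space_exponential_density)
next
  case False
  then show ?thesis by (intro subprob_spaceI) (simp_all add: emeasure_exponential_measure_nonpos)
qed

lemma emeasure_exponential_measure_greaterThan:
  assumes a: "0 < a" and t: "0 \<le> t"
  shows "emeasure (exponential_measure a) {t<..} = ennreal (exp (- a * t))"
proof -
  interpret prob_space "exponential_measure a" using a by (rule prob_space_exponential_density)
  have "{t<..} = space (exponential_measure a) - {..t}" by auto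
  then have "emeasure (exponential_measure a) {t<..} = 1 - emeasure (exponential_measure a) {..t}"
    using emeasure_compl[of "{..t}" "exponential_measure a"] emeasure_space_1
    by (simp add: emeasure_finite)
  also have "emeasure (exponential_measure a) {..t} = ennreal (1 - exp (- a * t))"
    using emeasure_erlang_density[OF a, of 0 t] t by (simp add: erlang_CDF_0)
  finally show ?thesis
    using a t by (simp add: ennreal_1[symmetric] ennreal_minus del: ennreal_1)
qed

lemma borel_measurable_emeasure_exponential_measure[measurable]:
  assumes Y[measurable]: "Y \<in> sets borel"
  shows "(\<lambda>a. emeasure (exponential_measure a) Y) \<in> borel_measurable borel"
proof -
  have "(\<lambda>a. emeasure (exponential_measure a) Y)
      = (\<lambda>a. \<integral>\<^sup>+x. ennreal (exponential_density a x) * indicator Y x \<partial>lborel)"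
    by (intro ext emeasure_density) auto
  also have "\<dots> \<in> borel_measurable borel"
    unfolding exponential_density_def by measurable
  finally show ?thesis .
qed

lemma sets_W_kernel: "sets (W_kernel n l) = sets (W_space n)"
  unfolding W_kernel_def W_space_def by (rule sets_PiM_cong) auto

lemma sets_Lam_law: "sets (Lam_law n \<gamma>) = sets (Lam_space n)"
  unfolding Lam_law_def Lam_space_def by (rule sets_PiM_cong) auto

lemma emeasure_W_kernel_PiE:
  assumes "\<And>k. k \<in> {..<n} \<times> {..<Suc n} \<Longrightarrow> Y k \<in> sets borel"
  shows "emeasure (W_kernel n l) (Pi\<^sub>E ({..<n} \<times> {..<Suc n}) Y)
       = (\<Prod>k\<in>{..<n} \<times> {..<Suc n}. emeasure (exponential_measure (l (snd k))) (Y k))"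
proof -
  interpret product_sigma_finite "\<lambda>(i, j). exponential_measure (l j)"
    using subprob_space_exponential_measure
    by (simp add: product_sigma_finite_def case_prod_beta subprob_space_def finite_measure_def)
  show ?thesis unfolding W_kernel_def
    by (subst emeasure_PiM) (auto simp: assms split: prod.splits intro!: prod.cong)
qed

lemma subprob_space_W_kernel: "subprob_space (W_kernel n l)"
proof (rule subprob_spaceI)
  have space_eq: "space (W_kernel n l) = Pi\<^sub>E ({..<n} \<times> {..<Suc n}) (\<lambda>_. UNIV)"
    unfolding W_kernel_def space_PiM by (rule PiE_cong) (auto split: prod.splits)
  show "emeasure (W_kernel n l) (space (W_kernel n l)) \<le> 1"
    unfolding space_eq emeasure_W_kernel_PiE[of n "\<lambda>_. UNIV", simplified]
    by (rule prod_le_1) (simp add: subprob_space.subprob_emeasure_le_1[OF subprob_space_exponential_measure])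
  show "space (W_kernel n l) \<noteq> {}"
    unfolding space_eq by (simp add: PiE_eq_empty_iff)
qed

lemma measurable_W_kernel: "W_kernel n \<in> Lam_law n \<gamma> \<rightarrow>\<^sub>M subprob_algebra (W_space n)"
proof -
  let ?I = "{..<n} \<times> {..<Suc n}"
  let ?G = "prod_algebra ?I (\<lambda>_. borel :: real measure)"
  have measurable_box: "(\<lambda>l. emeasure (W_kernel n l) A) \<in> borel_measurable (Lam_law n \<gamma>)"
    if "A \<in> ?G" for A
  proof -
    obtain Y where A: "A = Pi\<^sub>E ?I Y" and Y: "Y \<in> (\<Pi> k\<in>?I. sets borel)"
      using \<open>A \<in> ?G\<close> by (auto simp: prod_algebra_eq_finite)
    have "(\<lambda>l. emeasure (W_kernel n l) A)
        = (\<lambda>l. \<Prod>k\<in>?I. emeasure (exponential_measure (l (snd k))) (Y k))"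
      unfolding A using Y by (intro ext emeasure_W_kernel_PiE) auto
    also have "\<dots> \<in> borel_measurable (Lam_law n \<gamma>)"
    proof (rule borel_measurable_prod_ennreal)
      fix k assume k: "k \<in> ?I"
      have "(\<lambda>l. l (snd k)) \<in> borel_measurable (Lam_law n \<gamma>)"
        unfolding measurable_cong_sets[OF sets_Lam_law refl] Lam_space_def
        using k by (intro measurable_component_singleton) auto
      then show "(\<lambda>l. emeasure (exponential_measure (l (snd k))) (Y k)) \<in> borel_measurable (Lam_law n \<gamma>)"
        using Y k by (intro measurable_compose[OF _ borel_measurable_emeasure_exponential_measure]) auto
    qed
    finally show ?thesis .
  qed
  show ?thesis
  proof (rule measurable_subprob_algebra_generated[where \<Omega>="Pi\<^sub>E ?I (\<lambda>_. space borel)" and G="?G"])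
    show "sets (W_space n) = sigma_sets (Pi\<^sub>E ?I (\<lambda>_. space borel)) ?G"
      unfolding W_space_def by (rule sets_PiM)
    show "Int_stable ?G" by (rule Int_stable_prod_algebra)
    show "?G \<subseteq> Pow (Pi\<^sub>E ?I (\<lambda>_. space borel))" by (rule prod_algebra_sets_into_space)
    show "(\<lambda>l. emeasure (W_kernel n l) (Pi\<^sub>E ?I (\<lambda>_. space borel))) \<in> borel_measurable (Lam_law n \<gamma>)"
      by (rule measurable_box, rule space_in_prod_algebra)
  qed (auto intro: measurable_box subprob_space_W_kernel simp: sets_W_kernel)
qed

lemma measurable_W_kernel_Pair:
  "(\<lambda>l. distr (W_kernel n l) (Lam_space n \<Otimes>\<^sub>M W_space n) (\<lambda>w. (l, w)))
     \<in> Lam_law n \<gamma> \<rightarrow>\<^sub>M subprob_algebra (Lam_space n \<Otimes>\<^sub>M W_space n)"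
proof (rule measurable_distr2[OF _ measurable_W_kernel])
  have "sets (Lam_law n \<gamma> \<Otimes>\<^sub>M W_space n) = sets (Lam_space n \<Otimes>\<^sub>M W_space n)"
    using sets_Lam_law by (rule sets_pair_measure_cong) simp
  then show "(\<lambda>(l, w). (l, w)) \<in> Lam_law n \<gamma> \<Otimes>\<^sub>M W_space n \<rightarrow>\<^sub>M Lam_space n \<Otimes>\<^sub>M W_space n"
    unfolding case_prod_Pair_iden by (rule measurable_ident_sets)
qed

lemma nn_integral_Lam_law_prod:
  assumes \<gamma>: "\<And>j. j < Suc n \<Longrightarrow> 0 < \<gamma> j"
    and f: "\<And>j. j < Suc n \<Longrightarrow> f j \<in> borel_measurable borel"
  shows "(\<integral>\<^sup>+l. (\<Prod>j<Suc n. f j (l j)) \<partial>Lam_law n \<gamma>)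
       = (\<Prod>j<Suc n. \<integral>\<^sup>+a. f j a \<partial>gamma_measure (\<gamma> j))"
proof -
  \<comment> \<open>Outside the index set any sigma-finite factor will do.\<close>
  define G where "G j = (if j < Suc n then gamma_measure (\<gamma> j) else lborel)" for j
  have "sigma_finite_measure (G j)" for j
    using prob_space_gamma_measure[OF \<gamma>, of j]
    by (auto simp: G_def prob_space_imp_sigma_finite lborel.sigma_finite_measure_axioms)
  then interpret product_sigma_finite G by (simp add: product_sigma_finite_def)
  have "Lam_law n \<gamma> = PiM {..<Suc n} G"
    unfolding Lam_law_def G_def by (rule PiM_cong) auto
  then have "(\<integral>\<^sup>+l. (\<Prod>j<Suc n. f j (l j)) \<partial>Lam_law n \<gamma>) = (\<Prod>j<Suc n. integral\<^sup>N (G j) (f j))"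
    using f by (simp only:) (rule product_nn_integral_prod, auto simp: G_def)
  also have "\<dots> = (\<Prod>j<Suc n. \<integral>\<^sup>+a. f j a \<partial>gamma_measure (\<gamma> j))"
    by (rule prod.cong) (auto simp: G_def)
  finally show ?thesis .
qed

lemma emeasure_joint_law_box:
  assumes \<gamma>: "\<And>j. j < Suc n \<Longrightarrow> 0 < \<gamma> j"
    and S: "\<And>k. S k \<in> sets borel"
  shows "emeasure (joint_law n \<gamma>) (space (Lam_space n) \<times> Pi\<^sub>E ({..<n} \<times> {..<Suc n}) S)
       = (\<Prod>j<Suc n. \<integral>\<^sup>+a. (\<Prod>i<n. emeasure (exponential_measure a) (S (i, j))) \<partial>gamma_measure (\<gamma> j))"
    (is "emeasure _ ?B = _")
proof -
  let ?I = "{..<n} \<times> {..<Suc n}"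
  have box_sets: "Pi\<^sub>E ?I S \<in> sets (W_space n)"
    unfolding W_space_def using S by (intro sets_PiM_I_finite) auto
  then have B_sets: "?B \<in> sets (Lam_space n \<Otimes>\<^sub>M W_space n)"
    by (intro pair_measureI) auto
  have space_Lam_law: "space (Lam_law n \<gamma>) = space (Lam_space n)"
    by (rule sets_eq_imp_space_eq[OF sets_Lam_law])
  have "emeasure (joint_law n \<gamma>) ?B
      = (\<integral>\<^sup>+l. emeasure (distr (W_kernel n l) (Lam_space n \<Otimes>\<^sub>M W_space n) (\<lambda>w. (l, w))) ?B \<partial>Lam_law n \<gamma>)"
    unfolding joint_law_def
    by (rule emeasure_bind[OF _ measurable_W_kernel_Pair B_sets])
       (simp add: space_Lam_law Lam_space_def space_PiM PiE_eq_empty_iff)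
  also have "\<dots> = (\<integral>\<^sup>+l. (\<Prod>j<Suc n. \<Prod>i<n. emeasure (exponential_measure (l j)) (S (i, j))) \<partial>Lam_law n \<gamma>)"
  proof (rule nn_integral_cong)
    fix l assume l: "l \<in> space (Lam_law n \<gamma>)"
    have space_W_kernel: "space (W_kernel n l) = space (W_space n)"
      by (rule sets_eq_imp_space_eq[OF sets_W_kernel])
    have Pair_meas: "(\<lambda>w. (l, w)) \<in> W_kernel n l \<rightarrow>\<^sub>M Lam_space n \<Otimes>\<^sub>M W_space n"
      using l space_Lam_law measurable_ident_sets[OF sets_W_kernel] by (intro measurable_Pair) auto
    have "(\<lambda>w. (l, w)) -` ?B \<inter> space (W_kernel n l) = Pi\<^sub>E ?I S"
      using l space_Lam_law space_W_kernel sets.sets_into_space[OF box_sets] by auto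
    then have "emeasure (distr (W_kernel n l) (Lam_space n \<Otimes>\<^sub>M W_space n) (\<lambda>w. (l, w))) ?B
        = (\<Prod>k\<in>?I. emeasure (exponential_measure (l (snd k))) (S k))"
      using S by (simp add: emeasure_distr[OF Pair_meas B_sets] emeasure_W_kernel_PiE)
    also have "\<dots> = (\<Prod>i<n. \<Prod>j<Suc n. emeasure (exponential_measure (l j)) (S (i, j)))"
      unfolding prod.cartesian_product by (rule prod.cong) auto
    also have "\<dots> = (\<Prod>j<Suc n. \<Prod>i<n. emeasure (exponential_measure (l j)) (S (i, j)))"
      by (rule prod.swap)
    finally show "emeasure (distr (W_kernel n l) (Lam_space n \<Otimes>\<^sub>M W_space n) (\<lambda>w. (l, w))) ?B
        = (\<Prod>j<Suc n. \<Prod>i<n. emeasure (exponential_measure (l j)) (S (i, j)))" .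
  qed
  also have "\<dots> = (\<Prod>j<Suc n. \<integral>\<^sup>+a. (\<Prod>i<n. emeasure (exponential_measure a) (S (i, j))) \<partial>gamma_measure (\<gamma> j))"
    using \<gamma> S by (intro nn_integral_Lam_law_prod) auto
  finally show ?thesis .
qed

lemma prod_emeasure_exponential_measure_survival:
  fixes c t :: "nat \<Rightarrow> real"
  assumes a: "0 < a" and c: "\<And>i. i < n \<Longrightarrow> c i \<in> {0, 1}" and t: "\<And>i. i < n \<Longrightarrow> 0 \<le> t i"
  shows "(\<Prod>i<n. emeasure (exponential_measure a) (if c i \<noteq> 0 then {t i<..} else UNIV))
       = ennreal (exp (- a * (\<Sum>i<n. c i * t i)))"
proof -
  have "emeasure (exponential_measure a) (if c i \<noteq> 0 then {t i<..} else UNIV)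
      = ennreal (exp (- a * (c i * t i)))" if i: "i < n" for i
    using c[OF i] emeasure_exponential_measure_greaterThan[OF a t[OF i]]
      prob_space.emeasure_space_1[OF prob_space_exponential_density[OF a]]
    by auto
  then have "(\<Prod>i<n. emeasure (exponential_measure a) (if c i \<noteq> 0 then {t i<..} else UNIV))
      = ennreal (\<Prod>i<n. exp (- a * (c i * t i)))"
    by (simp add: prod_ennreal)
  also have "(\<Prod>i<n. exp (- a * (c i * t i))) = exp (- a * (\<Sum>i<n. c i * t i))"
    by (simp add: exp_sum[symmetric] sum_distrib_left sum_negf)
  finally show ?thesis .
qed

lemma measure_joint_law_survival:
  fixes c :: "nat \<Rightarrow> nat \<Rightarrow> real" and t :: "nat \<Rightarrow> real"
  assumes c: "\<And>i j. i < n \<Longrightarrow> j < Suc n \<Longrightarrow> c i j \<in> {0, 1}"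
    and t: "\<And>i. i < n \<Longrightarrow> 0 \<le> t i"
    and \<gamma>: "\<And>j. j < Suc n \<Longrightarrow> 0 < \<gamma> j"
  shows "measure (joint_law n \<gamma>) (space (Lam_space n) \<times>
           Pi\<^sub>E ({..<n} \<times> {..<Suc n}) (\<lambda>(i, j). if c i j \<noteq> 0 then {t i<..} else UNIV))
       = (\<Prod>j<Suc n. (1 + (\<Sum>i<n. c i j * t i)) powr (- \<gamma> j))"
proof -
  define s where "s j = (\<Sum>i<n. c i j * t i)" for j
  have laplace: "(\<integral>\<^sup>+a. (\<Prod>i<n. emeasure (exponential_measure a) (if c i j \<noteq> 0 then {t i<..} else UNIV))
      \<partial>gamma_measure (\<gamma> j)) = ennreal ((1 + s j) powr (- \<gamma> j))" if j: "j < Suc n" for j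
  proof -
    have "AE a in gamma_measure (\<gamma> j). 0 < a"
      by (subst AE_density) (auto simp: gamma_density_def)
    then have "(\<integral>\<^sup>+a. (\<Prod>i<n. emeasure (exponential_measure a) (if c i j \<noteq> 0 then {t i<..} else UNIV))
        \<partial>gamma_measure (\<gamma> j)) = (\<integral>\<^sup>+a. ennreal (exp (- s j * a)) \<partial>gamma_measure (\<gamma> j))"
      using c j t by (intro nn_integral_cong_AE)
        (auto simp: s_def prod_emeasure_exponential_measure_survival mult.commute)
    also have "\<dots> = ennreal ((1 + s j) powr (- \<gamma> j))"
    proof (rule nn_integral_gamma_measure_exp[OF \<gamma>[OF j]])
      show "0 \<le> s j"
        unfolding s_def using c j t by (intro sum_nonneg) fastforce
    qed
    finally show ?thesis .
  qed
  have "emeasure (joint_law n \<gamma>) (space (Lam_space n) \<times>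
          Pi\<^sub>E ({..<n} \<times> {..<Suc n}) (\<lambda>(i, j). if c i j \<noteq> 0 then {t i<..} else UNIV))
      = (\<Prod>j<Suc n. \<integral>\<^sup>+a. (\<Prod>i<n. emeasure (exponential_measure a)
          (if c i j \<noteq> 0 then {t i<..} else UNIV)) \<partial>gamma_measure (\<gamma> j))"
    by (subst emeasure_joint_law_box[OF \<gamma>]) (auto split: prod.split)
  also have "\<dots> = (\<Prod>j<Suc n. ennreal ((1 + s j) powr (- \<gamma> j)))"
    by (rule prod.cong) (simp_all add: laplace)
  also have "\<dots> = ennreal (\<Prod>j<Suc n. (1 + s j) powr (- \<gamma> j))"
    by (rule prod_ennreal) simp
  finally show ?thesis
    by (simp add: measure_def prod_nonneg s_def)
qed

theorem theorem4p1:
  fixes M :: "'a measure" and n :: nat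
    and c :: "nat \<Rightarrow> nat \<Rightarrow> real" and \<sigma> \<gamma> :: "nat \<Rightarrow> real"
    and Lam :: "'a \<Rightarrow> nat \<Rightarrow> real" and W :: "'a \<Rightarrow> nat \<Rightarrow> nat \<Rightarrow> real"
    and X :: "nat \<Rightarrow> 'a \<Rightarrow> real" and x :: "nat \<Rightarrow> real"
  assumes "prob_space M"
    and c01: "\<And>i j. i < n \<Longrightarrow> j < Suc n \<Longrightarrow> c i j \<in> {0, 1}"
    and \<sigma>_pos: "\<And>i. i < n \<Longrightarrow> \<sigma> i > 0"
    and \<gamma>_pos: "\<And>j. j < Suc n \<Longrightarrow> \<gamma> j > 0"
    and row_pos: "\<And>i. i < n \<Longrightarrow> (\<Sum>j<Suc n. c i j * \<gamma> j) > 0"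
    and meas: "(\<lambda>\<omega>. (\<lambda>j\<in>{..<Suc n}. Lam \<omega> j, \<lambda>(i, j)\<in>{..<n} \<times> {..<Suc n}. W \<omega> i j))
                 \<in> M \<rightarrow>\<^sub>M (Lam_space n \<Otimes>\<^sub>M W_space n)"
    and law: "distr M (Lam_space n \<Otimes>\<^sub>M W_space n)
                (\<lambda>\<omega>. (\<lambda>j\<in>{..<Suc n}. Lam \<omega> j, \<lambda>(i, j)\<in>{..<n} \<times> {..<Suc n}. W \<omega> i j))
              = joint_law n \<gamma>"
    and X_def: "\<And>i \<omega>. i < n \<Longrightarrow>
                 X i \<omega> = \<sigma> i * Min {W \<omega> i j | j. j < Suc n \<and> c i j \<noteq> 0}"
    and x_pos: "\<And>i. i < n \<Longrightarrow> x i > 0"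
  shows "measure M {\<omega> \<in> space M. \<forall>i<n. X i \<omega> > x i}
           = (\<Prod>j<Suc n. (1 + (\<Sum>i<n. c i j / \<sigma> i * x i)) powr (- \<gamma> j))"
proof -
  define t where "t i = x i / \<sigma> i" for i
  define F where "F = (\<lambda>\<omega>. (\<lambda>j\<in>{..<Suc n}. Lam \<omega> j, \<lambda>(i, j)\<in>{..<n} \<times> {..<Suc n}. W \<omega> i j))"
  define B where "B = space (Lam_space n) \<times>
    Pi\<^sub>E ({..<n} \<times> {..<Suc n}) (\<lambda>(i, j). if c i j \<noteq> 0 then {t i<..} else UNIV)"
  have B_sets: "B \<in> sets (Lam_space n \<Otimes>\<^sub>M W_space n)"
    unfolding B_def W_space_def by (intro pair_measureI sets_PiM_I_finite) (auto split: prod.split)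
  have X_gt_iff: "X i \<omega> > x i \<longleftrightarrow> (\<forall>j<Suc n. c i j \<noteq> 0 \<longrightarrow> W \<omega> i j > t i)" if i: "i < n" for i \<omega>
  proof -
    \<comment> \<open>\<open>row_pos\<close> only serves to make the minimum range over a nonempty set.\<close>
    have nonempty: "{W \<omega> i j | j. j < Suc n \<and> c i j \<noteq> 0} \<noteq> {}"
      using row_pos[OF i] by (force intro: sum.neutral)
    have "X i \<omega> > x i \<longleftrightarrow> Min {W \<omega> i j | j. j < Suc n \<and> c i j \<noteq> 0} > t i"
      using \<sigma>_pos[OF i] by (simp add: X_def[OF i] t_def pos_divide_less_eq mult.commute)
    also have "\<dots> \<longleftrightarrow> (\<forall>j<Suc n. c i j \<noteq> 0 \<longrightarrow> W \<omega> i j > t i)"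
      using Min_gr_iff[OF _ nonempty] by auto
    finally show ?thesis .
  qed
  have "{\<omega> \<in> space M. \<forall>i<n. X i \<omega> > x i} = F -` B \<inter> space M"
    by (force simp: X_gt_iff F_def B_def Lam_space_def space_PiM PiE_iff)
  then have "measure M {\<omega> \<in> space M. \<forall>i<n. X i \<omega> > x i} = measure (joint_law n \<gamma>) B"
    using measure_distr[OF meas B_sets] by (simp add: law F_def)
  also have "\<dots> = (\<Prod>j<Suc n. (1 + (\<Sum>i<n. c i j * t i)) powr (- \<gamma> j))"
    unfolding B_def using c01 \<sigma>_pos x_pos \<gamma>_pos
    by (intro measure_joint_law_survival) (auto simp: t_def less_imp_le)
  finally show ?thesis
    by (simp add: t_def)
qed

end
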